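(* Let $\lambda$ be a partition with at most $n$ positive parts, and let $n'\geq n$. If the poset $\mathcal B_\lambda^n$ is not a lattice, then the poset $\mathcal B_\lambda^{n'}$ is not a lattice.
   Context: For $N\geq 1$ and a partition $\nu$ with at most $N$ positive parts, $\mathcal B_\nu^N$ is the set of semistandard Young tableaux of shape $\nu$ (rows weakly increasing, columns strictly increasing) with entries in $\{1,\ldots,N+1\}$, partially ordered by the reflexive transitive closure of $T<F_i(T)$ for $i\in\{1,\ldots,N\}$ with $F_i(T)\neq 0$. Here $F_i$ is the type A crystal lowering operator: in the reading word of $T$ (rows read from bottom to top, each row left to right) keep only letters $i$ and $i+1$, replace each $i$ by ")" and each $i+1$ by "(", and match parentheses in the usual way; if there is no unmatched ")", $F_i(T)=0$; otherwise $F_i(T)$ is obtained by changing the entry $i$ corresponding to the rightmost unmatched ")" into $i+1$. *)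

theory Defs
  imports Main
begin

definition is_partition :: "nat list \<Rightarrow> bool" where
  "is_partition lam \<longleftrightarrow> sorted (rev lam) \<and> (\<forall>x\<in>set lam. 0 < x)"

(* Tableau = list of rows (top row first). SSYT of shape lam, entries in {1..N+1}. *)
definition ssyt :: "nat \<Rightarrow> nat list \<Rightarrow> nat list list \<Rightarrow> bool" where
  "ssyt N lam T \<longleftrightarrow> map length T = lam
     \<and> (\<forall>row\<in>set T. sorted row \<and> (\<forall>x\<in>set row. 1 \<le> x \<and> x \<le> N + 1))
     \<and> (\<forall>r. Suc r < length T \<longrightarrow>
           (\<forall>j < length (T ! Suc r). T ! r ! j < T ! Suc r ! j))"

definition tabB :: "nat \<Rightarrow> nat list \<Rightarrow> nat list list set" where
  "tabB N lam = {T. ssyt N lam T}"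

definition reading_word :: "nat list list \<Rightarrow> nat list" where
  "reading_word T = concat (rev T)"

fun split_by :: "nat list \<Rightarrow> 'a list \<Rightarrow> 'a list list" where
  "split_by [] w = []"
| "split_by (l # ls) w = take l w # split_by ls (drop l w)"

(* Scan the word: letter i is ')' and letter i+1 is '('; c counts currently
   unmatched '('; r records the position of the last unmatched ')'. *)
fun unm :: "nat \<Rightarrow> nat list \<Rightarrow> nat \<Rightarrow> nat \<Rightarrow> nat option \<Rightarrow> nat option" where
  "unm i [] k c r = r"
| "unm i (x # xs) k c r =
     (if x = i + 1 then unm i xs (Suc k) (Suc c) r
      else if x = i then
        (if 0 < c then unm i xs (Suc k) (c - 1) r else unm i xs (Suc k) c (Some k))
      else unm i xs (Suc k) c r)"

(* Crystal lowering operator F_i; None represents 0. *)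
definition crystal_F :: "nat \<Rightarrow> nat list list \<Rightarrow> nat list list option" where
  "crystal_F i T =
     (case unm i (reading_word T) 0 0 None of
        None \<Rightarrow> None
      | Some k \<Rightarrow> Some (rev (split_by (map length (rev T)) ((reading_word T)[k := i + 1]))))"

definition crystal_steps :: "nat \<Rightarrow> nat list \<Rightarrow> (nat list list \<times> nat list list) set" where
  "crystal_steps N lam =
     {(T, T'). T \<in> tabB N lam \<and> (\<exists>i\<in>{1..N}. crystal_F i T = Some T')}"

definition crystal_le :: "nat \<Rightarrow> nat list \<Rightarrow> nat list list \<Rightarrow> nat list list \<Rightarrow> bool" where
  "crystal_le N lam S T \<longleftrightarrow> (S, T) \<in> (crystal_steps N lam)\<^sup>*"

definition is_lattice :: "'a set \<Rightarrow> ('a \<Rightarrow> 'a \<Rightarrow> bool) \<Rightarrow> bool" where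
  "is_lattice A le \<longleftrightarrow>
     (\<forall>x\<in>A. \<forall>y\<in>A.
        (\<exists>z\<in>A. le x z \<and> le y z \<and> (\<forall>w\<in>A. le x w \<and> le y w \<longrightarrow> le z w)) \<and>
        (\<exists>z\<in>A. le z x \<and> le z y \<and> (\<forall>w\<in>A. le w x \<and> le w y \<longrightarrow> le w z)))"

end

theory Submission
  imports Defs
begin

(* Since F_i turns a single letter i into i + 1, a chain of lowering steps in B^n' ending at a
   tableau with entries at most n + 1 never leaves B^n: B^n is a down-set of B^n' carrying the
   induced order, so meets in B^n' of elements of B^n lie in B^n. Dually, adding d = n' - n to
   every entry intertwines F_i with F_(i+d) and no step creates a letter at most d, so the
   shifted copy of B^n is an up-set of B^n', order-isomorphic to B^n, and joins restrict to it. *)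

definition has_joins :: "'a set \<Rightarrow> ('a \<Rightarrow> 'a \<Rightarrow> bool) \<Rightarrow> bool" where
  "has_joins A le \<longleftrightarrow>
     (\<forall>x\<in>A. \<forall>y\<in>A. \<exists>z\<in>A. le x z \<and> le y z \<and> (\<forall>w\<in>A. le x w \<and> le y w \<longrightarrow> le z w))"

lemma is_lattice_iff_has_joins:
  "is_lattice A le \<longleftrightarrow> has_joins A le \<and> has_joins A (\<lambda>x y. le y x)"
  unfolding is_lattice_def has_joins_def by (simp add: ball_conj_distrib)

lemma has_joins_if_upset_embedding:
  assumes joins: "has_joins A leA"
    and maps_into: "f ` B \<subseteq> A"
    and embedding: "\<And>a b. a \<in> B \<Longrightarrow> b \<in> B \<Longrightarrow> leA (f a) (f b) \<longleftrightarrow> leB a b"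
    and upset: "\<And>a Z. a \<in> B \<Longrightarrow> Z \<in> A \<Longrightarrow> leA (f a) Z \<Longrightarrow> Z \<in> f ` B"
  shows "has_joins B leB"
  unfolding has_joins_def
proof (intro ballI)
  fix x y assume x: "x \<in> B" and y: "y \<in> B"
  then have "f x \<in> A" "f y \<in> A"
    using maps_into by auto
  then have "\<exists>Z\<in>A. leA (f x) Z \<and> leA (f y) Z \<and> (\<forall>w\<in>A. leA (f x) w \<and> leA (f y) w \<longrightarrow> leA Z w)"
    using joins unfolding has_joins_def by blast
  then obtain Z where Z: "Z \<in> A" "leA (f x) Z" "leA (f y) Z"
    and least: "\<And>w. w \<in> A \<Longrightarrow> leA (f x) w \<Longrightarrow> leA (f y) w \<Longrightarrow> leA Z w"
    by blast
  obtain z where z: "z \<in> B" "Z = f z"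
    using upset[OF x Z(1,2)] by blast
  show "\<exists>z\<in>B. leB x z \<and> leB y z \<and> (\<forall>w\<in>B. leB x w \<and> leB y w \<longrightarrow> leB z w)"
  proof (intro bexI conjI ballI impI)
    show "leB x z" "leB y z"
      using Z z x y embedding by auto
    fix w assume w: "w \<in> B" "leB x w \<and> leB y w"
    then have "leA Z (f w)"
      using least[of "f w"] maps_into embedding x y by auto
    then show "leB z w"
      using embedding w(1) z by auto
  qed (fact z(1))
qed

lemma is_lattice_if_embeds_as_downset_and_upset:
  assumes lattice: "is_lattice A leA"
    and subset: "B \<subseteq> A"
    and restriction: "\<And>a b. a \<in> B \<Longrightarrow> b \<in> B \<Longrightarrow> leA a b \<longleftrightarrow> leB a b"
    and downset: "\<And>a Z. a \<in> B \<Longrightarrow> Z \<in> A \<Longrightarrow> leA Z a \<Longrightarrow> Z \<in> B"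
    and maps_into: "f ` B \<subseteq> A"
    and embedding: "\<And>a b. a \<in> B \<Longrightarrow> b \<in> B \<Longrightarrow> leA (f a) (f b) \<longleftrightarrow> leB a b"
    and upset: "\<And>a Z. a \<in> B \<Longrightarrow> Z \<in> A \<Longrightarrow> leA (f a) Z \<Longrightarrow> Z \<in> f ` B"
  shows "is_lattice B leB"
proof -
  have joins: "has_joins A leA" and dual: "has_joins A (\<lambda>x y. leA y x)"
    using lattice unfolding is_lattice_iff_has_joins by blast+
  have "has_joins B leB"
    using joins maps_into embedding upset by (rule has_joins_if_upset_embedding)
  moreover have "has_joins B (\<lambda>x y. leB y x)"
  proof (rule has_joins_if_upset_embedding[OF dual, where f = id])
    show "id ` B \<subseteq> A"
      using subset by simp
    show "leA (id b) (id a) \<longleftrightarrow> leB b a" if "a \<in> B" "b \<in> B" for a b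
      using restriction that by simp
    show "Z \<in> id ` B" if "a \<in> B" "Z \<in> A" "leA Z (id a)" for a Z
      using downset that by simp
  qed
  ultimately show ?thesis
    unfolding is_lattice_iff_has_joins by blast
qed

definition shift_tableau :: "nat \<Rightarrow> nat list list \<Rightarrow> nat list list" where
  "shift_tableau d T = map (map (\<lambda>x. x + d)) T"

lemma inj_shift_tableau: "inj (shift_tableau d)"
  unfolding shift_tableau_def by (intro inj_mapI) (simp add: inj_def)

lemma set_concat_shift_tableau:
  "set (concat (shift_tableau d T)) = (\<lambda>x. x + d) ` set (concat T)"
  by (auto simp: shift_tableau_def)

lemma set_reading_word [simp]: "set (reading_word T) = set (concat T)"
  by (simp add: reading_word_def)

lemma reading_word_shift_tableau:
  "reading_word (shift_tableau d T) = map (\<lambda>x. x + d) (reading_word T)"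
  by (simp add: reading_word_def shift_tableau_def rev_map map_concat)

lemma unm_SomeD:
  "unm i w k0 c r = Some k \<Longrightarrow> r = Some k \<or> (k0 \<le> k \<and> k < k0 + length w \<and> w ! (k - k0) = i)"
  by (induction w arbitrary: k0 c r) (fastforce simp: nth_Cons' split: if_splits)+

lemma unm_shift: "unm (i + d) (map (\<lambda>x. x + d) w) k c r = unm i w k c r"
  by (induction w arbitrary: k c r) auto

lemma split_by_map: "split_by ls (map f w) = map (map f) (split_by ls w)"
  by (induction ls arbitrary: w) (auto simp: take_map drop_map)

lemma concat_split_by: "concat (split_by ls w) = take (sum_list ls) w"
  by (induction ls arbitrary: w) (auto simp: take_add)

lemma crystal_F_shift_tableau:
  "crystal_F (i + d) (shift_tableau d T) = map_option (shift_tableau d) (crystal_F i T)"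
proof -
  have lengths: "map length (rev (shift_tableau d T)) = map length (rev T)"
    by (simp add: shift_tableau_def rev_map comp_def)
  have update: "(map (\<lambda>x. x + d) w)[k := i + d + 1] = map (\<lambda>x. x + d) (w[k := i + 1])" for w k
    by (simp add: map_update)
  show ?thesis
    unfolding crystal_F_def reading_word_shift_tableau unm_shift lengths update
    by (auto split: option.splits simp: map_update[symmetric] split_by_map shift_tableau_def rev_map)
qed

lemma reading_word_crystal_F:
  assumes "crystal_F i S = Some Y"
  obtains k where "k < length (reading_word S)" "reading_word S ! k = i"
    and "reading_word Y = (reading_word S)[k := i + 1]"
proof -
  let ?w = "reading_word S"
  obtain k where k: "unm i ?w 0 0 None = Some k"
    and Y: "Y = rev (split_by (map length (rev S)) (?w[k := i + 1]))"
    using assms unfolding crystal_F_def by (auto split: option.splits)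
  have "length ?w = sum_list (map length (rev S))"
    by (simp add: reading_word_def length_concat)
  then have "reading_word Y = ?w[k := i + 1]"
    unfolding Y reading_word_def by (simp add: concat_split_by)
  with unm_SomeD[OF k] show thesis
    by (intro that) auto
qed

lemma crystal_F_entries:
  assumes "crystal_F i S = Some Y"
  shows "i \<in> set (concat S)" and "i + 1 \<in> set (concat Y)"
    and "set (concat S) \<subseteq> insert i (set (concat Y))"
    and "set (concat Y) \<subseteq> insert (i + 1) (set (concat S))"
proof -
  let ?w = "reading_word S"
  obtain k where k: "k < length ?w" "?w ! k = i" and Y: "reading_word Y = ?w[k := i + 1]"
    using reading_word_crystal_F[OF assms] .
  have "?w = (?w[k := i + 1])[k := i]"
    using k by (metis list_update_id list_update_overwrite)
  then have "set ?w \<subseteq> insert i (set (?w[k := i + 1]))"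
    by (metis set_update_subset_insert)
  moreover have "i \<in> set ?w"
    using k by (metis nth_mem)
  moreover have "i + 1 \<in> set (?w[k := i + 1])"
    using k(1) by (rule set_update_memI)
  moreover have "set (?w[k := i + 1]) \<subseteq> insert (i + 1) (set ?w)"
    by (rule set_update_subset_insert)
  ultimately show "i \<in> set (concat S)" "i + 1 \<in> set (concat Y)"
    "set (concat S) \<subseteq> insert i (set (concat Y))"
    "set (concat Y) \<subseteq> insert (i + 1) (set (concat S))"
    unfolding set_reading_word[symmetric] Y by blast+
qed

lemma ssyt_entries: "ssyt N lam T \<Longrightarrow> v \<in> set (concat T) \<Longrightarrow> 1 \<le> v \<and> v \<le> N + 1"
  unfolding ssyt_def by auto

lemma ssyt_iff_entries_le:
  "ssyt n' lam T \<Longrightarrow> ssyt n lam T \<longleftrightarrow> (\<forall>v\<in>set (concat T). v \<le> n + 1)"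
  unfolding ssyt_def by auto

lemma tabB_mono: "n \<le> n' \<Longrightarrow> tabB n lam \<subseteq> tabB n' lam"
  unfolding tabB_def ssyt_def by fastforce

lemma partition_nth_Suc_le: "is_partition lam \<Longrightarrow> Suc r < length lam \<Longrightarrow> lam ! Suc r \<le> lam ! r"
  unfolding is_partition_def using sorted_rev_nth_mono[of lam r "Suc r"] by auto

lemma ssyt_shift_tableau_iff:
  assumes "is_partition lam" and positive: "\<forall>v\<in>set (concat T). 1 \<le> v"
  shows "ssyt (n + d) lam (shift_tableau d T) \<longleftrightarrow> ssyt n lam T"
proof -
  let ?S = "shift_tableau d T"
  have lengths: "map length ?S = map length T"
    by (simp add: shift_tableau_def comp_def)
  have rows: "(\<forall>row\<in>set ?S. sorted row \<and> (\<forall>x\<in>set row. 1 \<le> x \<and> x \<le> n + d + 1))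
      \<longleftrightarrow> (\<forall>row\<in>set T. sorted row \<and> (\<forall>x\<in>set row. 1 \<le> x \<and> x \<le> n + 1))"
    using positive by (auto simp: shift_tableau_def sorted_map intro: trans_le_add1)
  have columns: "(\<forall>r. Suc r < length ?S \<longrightarrow> (\<forall>j < length (?S ! Suc r). ?S ! r ! j < ?S ! Suc r ! j))
      \<longleftrightarrow> (\<forall>r. Suc r < length T \<longrightarrow> (\<forall>j < length (T ! Suc r). T ! r ! j < T ! Suc r ! j))"
    if "map length T = lam"
  proof -
    have "j < length (T ! r)" if "Suc r < length T" "j < length (T ! Suc r)" for r j
      using partition_nth_Suc_le[OF assms(1), of r] that \<open>map length T = lam\<close> by auto
    then show ?thesis
      by (auto simp: shift_tableau_def)
  qed
  show ?thesis
    unfolding ssyt_def lengths rows using columns by blast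
qed

lemma shift_tableau_in_tabB:
  "is_partition lam \<Longrightarrow> T \<in> tabB n lam \<Longrightarrow> shift_tableau d T \<in> tabB (n + d) lam"
  using ssyt_shift_tableau_iff ssyt_entries unfolding tabB_def by blast

lemma crystal_le_imp_in_tabB:
  "crystal_le N lam S T \<Longrightarrow> T \<in> tabB N lam \<Longrightarrow> S \<in> tabB N lam"
  unfolding crystal_le_def by (erule converse_rtranclE) (auto simp: crystal_steps_def)

lemma crystal_le_mono:
  assumes "n \<le> n'" and "crystal_le n lam S T"
  shows "crystal_le n' lam S T"
proof -
  have "crystal_steps n lam \<subseteq> crystal_steps n' lam"
    using tabB_mono[OF assms(1)] assms(1) by (fastforce simp: crystal_steps_def)
  then show ?thesis
    using assms(2) rtrancl_mono unfolding crystal_le_def by blast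
qed

lemma crystal_step_into_tabB:
  assumes "S \<in> tabB n' lam" "crystal_F i S = Some Y" "Y \<in> tabB n lam"
  shows "S \<in> tabB n lam" and "i \<le> n"
proof -
  have bounded: "\<forall>v\<in>set (concat Y). v \<le> n + 1"
    using assms(3) ssyt_entries unfolding tabB_def by blast
  then show "i \<le> n"
    using crystal_F_entries(2)[OF assms(2)] by fastforce
  then have "\<forall>v\<in>set (concat S). v \<le> n + 1"
    using bounded crystal_F_entries(3)[OF assms(2)] by auto
  then show "S \<in> tabB n lam"
    using assms(1) ssyt_iff_entries_le unfolding tabB_def by blast
qed

lemma crystal_le_into_tabB:
  assumes "crystal_le n' lam S T" and "T \<in> tabB n lam"
  shows "crystal_le n lam S T"
  using assms(1) unfolding crystal_le_def
proof (induction rule: converse_rtrancl_induct)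
  case base
  then show ?case by simp
next
  case (step S Y)
  obtain i where i: "S \<in> tabB n' lam" "i \<in> {1..n'}" "crystal_F i S = Some Y"
    using step.hyps(1) unfolding crystal_steps_def by auto
  have "Y \<in> tabB n lam"
    using crystal_le_imp_in_tabB step.IH assms(2) unfolding crystal_le_def by blast
  then have "(S, Y) \<in> crystal_steps n lam"
    using crystal_step_into_tabB[OF i(1,3)] i(2,3) unfolding crystal_steps_def by auto
  then show ?case
    using step.IH by (rule converse_rtrancl_into_rtrancl)
qed

lemma crystal_le_shift_tableau:
  assumes "is_partition lam" and "crystal_le n lam S T"
  shows "crystal_le (n + d) lam (shift_tableau d S) (shift_tableau d T)"
  using assms(2) unfolding crystal_le_def
proof (induction rule: rtrancl_induct)
  case base
  then show ?case by simp
next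
  case (step Y Z)
  obtain i where i: "Y \<in> tabB n lam" "i \<in> {1..n}" "crystal_F i Y = Some Z"
    using step.hyps(2) unfolding crystal_steps_def by auto
  have "crystal_F (i + d) (shift_tableau d Y) = Some (shift_tableau d Z)"
    using i(3) by (simp add: crystal_F_shift_tableau)
  then have "(shift_tableau d Y, shift_tableau d Z) \<in> crystal_steps (n + d) lam"
    using shift_tableau_in_tabB[OF assms(1) i(1)] i(2) unfolding crystal_steps_def by force
  with step.IH show ?case
    by (rule rtrancl_into_rtrancl)
qed

(* Only the sources of lowering steps are required to be tableaux, so the endpoint Z need not
   lie in B^(n+d); positivity of the preimage is what is carried along instead. *)
lemma crystal_le_from_shift_tableau:
  assumes "is_partition lam" "S \<in> tabB n lam"
    and "crystal_le (n + d) lam (shift_tableau d S) Z"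
  obtains T where "Z = shift_tableau d T" "crystal_le n lam S T" "\<forall>v\<in>set (concat T). 1 \<le> v"
proof -
  have "\<exists>T. Z = shift_tableau d T \<and> crystal_le n lam S T \<and> (\<forall>v\<in>set (concat T). 1 \<le> v)"
    using assms(3) unfolding crystal_le_def
  proof (induction rule: rtrancl_induct)
    case base
    then show ?case
      using assms(2) ssyt_entries unfolding tabB_def crystal_le_def by blast
  next
    case (step Y Z)
    obtain y where y: "Y = shift_tableau d y" "crystal_le n lam S y" "\<forall>v\<in>set (concat y). 1 \<le> v"
      using step.IH unfolding crystal_le_def by blast
    obtain i where i: "Y \<in> tabB (n + d) lam" "i \<in> {1..n + d}" "crystal_F i Y = Some Z"
      using step.hyps(2) unfolding crystal_steps_def by auto
    have "y \<in> tabB n lam"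
      using i(1) y(1,3) ssyt_shift_tableau_iff[OF assms(1)] unfolding tabB_def by blast
    obtain v where "v \<in> set (concat y)" "i = v + d"
      using crystal_F_entries(1)[OF i(3)] unfolding y(1) set_concat_shift_tableau by blast
    then have "d < i"
      using y(3) by fastforce
    then obtain j where j: "i = j + d" "j \<in> {1..n}"
      using i(2) by (intro that[of "i - d"]) auto
    then obtain z where z: "crystal_F j y = Some z" "Z = shift_tableau d z"
      using i(3) y(1) crystal_F_shift_tableau[of j d y] by auto
    have "(y, z) \<in> crystal_steps n lam"
      using \<open>y \<in> tabB n lam\<close> j(2) z(1) unfolding crystal_steps_def by auto
    moreover have "\<forall>v\<in>set (concat z). 1 \<le> v"
      using crystal_F_entries(4)[OF z(1)] y(3) by auto
    ultimately show ?case
      using y(2) z(2) unfolding crystal_le_def by (blast intro: rtrancl_into_rtrancl)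
  qed
  then show thesis
    using that by blast
qed

lemma crystal_le_shift_tableau_iff:
  assumes "is_partition lam" and "S \<in> tabB n lam"
  shows "crystal_le (n + d) lam (shift_tableau d S) (shift_tableau d T) \<longleftrightarrow> crystal_le n lam S T"
  using crystal_le_from_shift_tableau[OF assms] crystal_le_shift_tableau[OF assms(1)]
    inj_shift_tableau[of d]
  by (metis injD)

lemma shift_tableau_image_upward_closed:
  assumes "is_partition lam" "S \<in> tabB n lam" "Z \<in> tabB (n + d) lam"
    and "crystal_le (n + d) lam (shift_tableau d S) Z"
  shows "Z \<in> shift_tableau d ` tabB n lam"
proof -
  obtain T where T: "Z = shift_tableau d T" "\<forall>v\<in>set (concat T). 1 \<le> v"
    using crystal_le_from_shift_tableau[OF assms(1,2,4)] by blast
  then have "T \<in> tabB n lam"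
    using assms(3) ssyt_shift_tableau_iff[OF assms(1)] unfolding tabB_def by blast
  with T(1) show ?thesis
    by blast
qed

theorem lemma5p3:
  fixes n n' :: nat and lam :: "nat list"
  assumes "1 \<le> n" and "n \<le> n'"
    and "is_partition lam" and "length lam \<le> n"
    and "\<not> is_lattice (tabB n lam) (crystal_le n lam)"
  shows "\<not> is_lattice (tabB n' lam) (crystal_le n' lam)"
proof
  assume "is_lattice (tabB n' lam) (crystal_le n' lam)"
  obtain d where n': "n' = n + d"
    using assms(2) le_Suc_ex by blast
  have "is_lattice (tabB n lam) (crystal_le n lam)"
  proof (rule is_lattice_if_embeds_as_downset_and_upset[where f = "shift_tableau d"])
    show "is_lattice (tabB n' lam) (crystal_le n' lam)" by fact
    show "tabB n lam \<subseteq> tabB n' lam"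
      using tabB_mono[OF assms(2)] .
    show "crystal_le n' lam a b \<longleftrightarrow> crystal_le n lam a b" if "b \<in> tabB n lam" for a b
      using crystal_le_mono[OF assms(2)] crystal_le_into_tabB that by blast
    show "Z \<in> tabB n lam" if "a \<in> tabB n lam" "crystal_le n' lam Z a" for a Z
      using crystal_le_into_tabB crystal_le_imp_in_tabB that by blast
    show "shift_tableau d ` tabB n lam \<subseteq> tabB n' lam"
      using shift_tableau_in_tabB[OF assms(3)] unfolding n' by blast
    show "crystal_le n' lam (shift_tableau d a) (shift_tableau d b) \<longleftrightarrow> crystal_le n lam a b"
      if "a \<in> tabB n lam" for a b
      using crystal_le_shift_tableau_iff[OF assms(3) that] unfolding n' .
    show "Z \<in> shift_tableau d ` tabB n lam"
      if "a \<in> tabB n lam" "Z \<in> tabB n' lam" "crystal_le n' lam (shift_tableau d a) Z" for a Z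
      using shift_tableau_image_upward_closed[OF assms(3)] that unfolding n' by blast
  qed
  with assms(5) show False
    by contradiction
qed

end
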